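(* Let $\mathbf k=(k_1,\ldots,k_r)\in\mathbb N^r$, $\mathbf x=(x_1,\ldots,x_r)$ with $|x_j|\le1$, $l\in\mathbb N_0$ and $n\in\mathbb N$. Then \[ \sum_{n\ge n_1\ge n_2\ge\cdots\ge n_r>0}\prod_{j=1}^r\frac{x_j^{n_j+l}}{(n_j+l)^{k_j}}=(-1)^r\sum_{j=0}^r(-1)^j\,\zeta^\star_{n+l}(k_1,\ldots,k_j;x_1,\ldots,x_j)\,\zeta_l(k_r,k_{r-1},\ldots,k_{j+1};x_r,x_{r-1},\ldots,x_{j+1}). \]
   Context: $\zeta_n(\mathbf k;\mathbf x)=\sum_{n\ge n_1>\cdots>n_r\ge1}\prod_i x_i^{n_i}/n_i^{k_i}$ and $\zeta^\star_n(\mathbf k;\mathbf x)=\sum_{n\ge n_1\ge\cdots\ge n_r\ge1}\prod_i x_i^{n_i}/n_i^{k_i}$ for $n\in\mathbb N_0$; both equal $1$ for the empty index, and a sum over an empty range is $0$. *)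

theory Defs
  imports Complex_Main
begin

text \<open>Truncated multiple polylogarithm sums, indices given as lists
  ks = [k_1,...,k_r], xs = [x_1,...,x_r] (of equal length).
  mzv_trunc n ks xs  = sum over n >= n_1 > n_2 > ... > n_r >= 1 of prod x_i^n_i / n_i^k_i,
  mzsv_trunc n ks xs = sum over n >= n_1 >= n_2 >= ... >= n_r >= 1 of the same.\<close>

fun mzv_trunc :: "nat \<Rightarrow> nat list \<Rightarrow> complex list \<Rightarrow> complex" where
  "mzv_trunc n (k # ks) (x # xs) =
     (\<Sum>m=1..n. x ^ m / of_nat m ^ k * mzv_trunc (m - 1) ks xs)"
| "mzv_trunc n _ _ = 1"

fun mzsv_trunc :: "nat \<Rightarrow> nat list \<Rightarrow> complex list \<Rightarrow> complex" where
  "mzsv_trunc n (k # ks) (x # xs) =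
     (\<Sum>m=1..n. x ^ m / of_nat m ^ k * mzsv_trunc m ks xs)"
| "mzsv_trunc n _ _ = 1"

fun shifted_star :: "nat \<Rightarrow> nat \<Rightarrow> nat list \<Rightarrow> complex list \<Rightarrow> complex" where
  "shifted_star l n (k # ks) (x # xs) =
     (\<Sum>m=1..n. x ^ (m + l) / of_nat (m + l) ^ k * shifted_star l m ks xs)"
| "shifted_star l n _ _ = 1"

end

theory Submission
  imports Defs
begin

text \<open>Write S_l(N; k_1..k_r) for the star sum over N >= n_1 >= ... >= n_r > l; after
  the shift n_j := n_j + l the left-hand side is S_l(n + l; k_1..k_r). Raising l by one
  removes exactly the terms with n_r = l + 1, so
  S_(l+1)(k_1..k_r) = S_l(k_1..k_r) - x_r^(l+1) / (l+1)^k_r * S_l(k_1..k_(r-1)).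
  The alternating right-hand side obeys the same recursion in l, since k_r is the leading
  index of every zeta_l(k_r, ...) and
  zeta_(l+1)(k_r, ...) = zeta_l(k_r, ...) + x_r^(l+1) / (l+1)^k_r * zeta_l(...).
  At l = 0 both sides reduce to the plain star sum, only the term j = r surviving on the
  right.\<close>

fun mzsv_above :: "nat \<Rightarrow> nat \<Rightarrow> nat list \<Rightarrow> complex list \<Rightarrow> complex" where
  "mzsv_above l N (k # ks) (x # xs) =
     (\<Sum>m=Suc l..N. x ^ m / of_nat m ^ k * mzsv_above l m ks xs)"
| "mzsv_above l N _ _ = 1"

lemma mzsv_above_0:
  "length ks = length xs \<Longrightarrow> mzsv_above 0 N ks xs = mzsv_trunc N ks xs"
proof (induction ks arbitrary: xs N)
  case (Cons k ks)
  then show ?case by (cases xs) auto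
qed simp

lemma shifted_star_eq_mzsv_above:
  "length ks = length xs \<Longrightarrow> shifted_star l n ks xs = mzsv_above l (n + l) ks xs"
proof (induction ks arbitrary: xs n)
  case Nil
  then show ?case by simp
next
  case (Cons k ks)
  then obtain x xs' where xs: "xs = x # xs'" and len: "length ks = length xs'"
    by (cases xs) auto
  have "shifted_star l n (k # ks) xs =
      (\<Sum>m=1..n. x ^ (m + l) / of_nat (m + l) ^ k * mzsv_above l (m + l) ks xs')"
    by (simp add: xs Cons.IH[OF len])
  also have "\<dots> = (\<Sum>m=1+l..n+l. x ^ m / of_nat m ^ k * mzsv_above l m ks xs')"
    by (rule sum.shift_bounds_cl_nat_ivl[symmetric])
  finally show ?case by (simp add: xs)
qed

lemma mzsv_above_snoc:
  assumes "length ks = length xs" and "Suc l \<le> N"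
  shows "mzsv_above l N (ks @ [k]) (xs @ [x]) =
    mzsv_above (Suc l) N (ks @ [k]) (xs @ [x]) +
    x ^ Suc l / of_nat (Suc l) ^ k * mzsv_above l N ks xs"
  using assms
proof (induction ks arbitrary: xs N)
  case Nil
  then show ?case by (simp add: sum.atLeast_Suc_atMost)
next
  case (Cons a ks)
  then obtain b xs' where xs: "xs = b # xs'" and len: "length ks = length xs'"
    by (cases xs) auto
  let ?term = "\<lambda>L m. b ^ m / of_nat m ^ a * mzsv_above L m (ks @ [k]) (xs' @ [x])"
  have lowest_term_vanishes: "?term (Suc l) (Suc l) = 0"
    by (cases ks; cases xs') auto
  have "mzsv_above l N ((a # ks) @ [k]) (xs @ [x]) = (\<Sum>m=Suc l..N. ?term l m)"
    by (simp add: xs)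
  also have "\<dots> = (\<Sum>m=Suc l..N. ?term (Suc l) m) +
      x ^ Suc l / of_nat (Suc l) ^ k * (\<Sum>m=Suc l..N. b ^ m / of_nat m ^ a * mzsv_above l m ks xs')"
    by (simp add: Cons.IH[OF len] sum.distrib sum_distrib_left algebra_simps)
  also have "(\<Sum>m=Suc l..N. ?term (Suc l) m) = (\<Sum>m=Suc (Suc l)..N. ?term (Suc l) m)"
    using Cons.prems(2) lowest_term_vanishes by (simp add: sum.atLeast_Suc_atMost)
  finally show ?case by (simp add: xs)
qed

definition mzsv_mzv_alternating_sum :: "nat \<Rightarrow> nat \<Rightarrow> nat list \<Rightarrow> complex list \<Rightarrow> complex" where
  "mzsv_mzv_alternating_sum l N ks xs = (-1) ^ length ks * (\<Sum>j=0..length ks. (-1) ^ j *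
     mzsv_trunc N (take j ks) (take j xs) * mzv_trunc l (rev (drop j ks)) (rev (drop j xs)))"

lemma mzv_trunc_0:
  "ks \<noteq> [] \<Longrightarrow> length ks = length xs \<Longrightarrow> mzv_trunc 0 ks xs = 0"
  by (cases ks; cases xs) auto

lemma mzsv_mzv_alternating_sum_0:
  assumes "length ks = length xs"
  shows "mzsv_mzv_alternating_sum 0 N ks xs = mzsv_trunc N ks xs"
proof -
  let ?r = "length ks"
  have "mzv_trunc 0 (rev (drop j ks)) (rev (drop j xs)) = 0" if "j < ?r" for j
    using that assms by (intro mzv_trunc_0) auto
  then have "(\<Sum>j=0..?r. (-1) ^ j * mzsv_trunc N (take j ks) (take j xs) *
        mzv_trunc 0 (rev (drop j ks)) (rev (drop j xs))) = (-1) ^ ?r * mzsv_trunc N ks xs"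
    using assms by (subst sum.last_plus) (simp_all add: sum.neutral)
  then show ?thesis
    by (simp add: mzsv_mzv_alternating_sum_def power_mult_distrib[symmetric])
qed

lemma mzsv_mzv_alternating_sum_snoc:
  assumes "length ks = length xs"
  shows "mzsv_mzv_alternating_sum (Suc l) N (ks @ [k]) (xs @ [x]) =
    mzsv_mzv_alternating_sum l N (ks @ [k]) (xs @ [x]) -
    x ^ Suc l / of_nat (Suc l) ^ k * mzsv_mzv_alternating_sum l N ks xs"
proof -
  let ?r = "length ks"
  let ?c = "x ^ Suc l / of_nat (Suc l) ^ k"
  define S where "S j = (-1) ^ j * mzsv_trunc N (take j ks) (take j xs)" for j
  define T where "T = mzsv_trunc N (ks @ [k]) (xs @ [x])"
  have snoc_split: "mzsv_mzv_alternating_sum L N (ks @ [k]) (xs @ [x]) = (-1) ^ Suc ?r *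
      ((\<Sum>j=0..?r. S j * mzv_trunc L (k # rev (drop j ks)) (x # rev (drop j xs)))
       + (-1) ^ Suc ?r * T)" for L
    using assms
    by (simp add: mzsv_mzv_alternating_sum_def sum.atLeast0_atMost_Suc S_def T_def mult.assoc)
  have shorter: "mzsv_mzv_alternating_sum l N ks xs = (-1) ^ ?r *
      (\<Sum>j=0..?r. S j * mzv_trunc l (rev (drop j ks)) (rev (drop j xs)))"
    by (simp add: mzsv_mzv_alternating_sum_def S_def mult.assoc)
  have "(\<Sum>j=0..?r. S j * mzv_trunc (Suc l) (k # rev (drop j ks)) (x # rev (drop j xs))) =
      (\<Sum>j=0..?r. S j * mzv_trunc l (k # rev (drop j ks)) (x # rev (drop j xs))) +
      ?c * (\<Sum>j=0..?r. S j * mzv_trunc l (rev (drop j ks)) (rev (drop j xs)))"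
    by (simp add: sum.distrib sum_distrib_left algebra_simps)
  then show ?thesis
    unfolding snoc_split shorter by (simp add: algebra_simps)
qed

lemma mzsv_above_eq_alternating_sum:
  "l \<le> N \<Longrightarrow> length ks = length xs \<Longrightarrow>
    mzsv_above l N ks xs = mzsv_mzv_alternating_sum l N ks xs"
proof (induction l arbitrary: ks xs)
  case 0
  then show ?case by (simp add: mzsv_above_0 mzsv_mzv_alternating_sum_0)
next
  case (Suc l)
  show ?case
  proof (cases ks rule: rev_exhaust)
    case Nil
    with Suc.prems show ?thesis by (simp add: mzsv_mzv_alternating_sum_def)
  next
    case (snoc ks' k)
    with Suc.prems obtain xs' x where xs: "xs = xs' @ [x]"
      by (cases xs rule: rev_exhaust) auto
    have len: "length ks' = length xs'"
      using Suc.prems snoc xs by simp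
    show ?thesis
      using mzsv_above_snoc[OF len Suc.prems(1), of k x]
        Suc.IH[of "ks' @ [k]" "xs' @ [x]"] Suc.IH[of ks' xs'] Suc.prems len
      by (simp add: mzsv_mzv_alternating_sum_snoc snoc xs)
  qed
qed

theorem mainTheorem13:
  fixes ks :: "nat list" and xs :: "complex list" and l n :: nat
  assumes "length xs = length ks"
    and "\<forall>k\<in>set ks. k \<ge> 1"
    and "\<forall>x\<in>set xs. norm x \<le> 1"
    and "n \<ge> 1"
  shows "shifted_star l n ks xs =
    (-1) ^ length ks * (\<Sum>j=0..length ks. (-1) ^ j *
       mzsv_trunc (n + l) (take j ks) (take j xs) *
       mzv_trunc l (rev (drop j ks)) (rev (drop j xs)))"
proof -
  have len: "length ks = length xs"
    using assms(1) by simp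
  have "shifted_star l n ks xs = mzsv_above l (n + l) ks xs"
    using shifted_star_eq_mzsv_above[OF len] .
  also have "\<dots> = mzsv_mzv_alternating_sum l (n + l) ks xs"
    using mzsv_above_eq_alternating_sum[OF _ len] by simp
  finally show ?thesis
    unfolding mzsv_mzv_alternating_sum_def .
qed

end
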